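(* Let $\gamma:[0,1]\to[0,1]^2$ be a continuous curve with $\gamma(0)=(0,0)$, $\gamma(1)=(1,1)$, and $\pi_2\circ\gamma\in\mathcal U$. Then for each $n\in\mathbb{N}$ there exist points $A_1,\ldots,A_{n+1}$ on $\gamma$ such that, setting $A_0=(0,0)$, $A_{n+2}=(1,1)$ and $A_{-1}=A_{n+1}-(1,1)$, $$\pi_2(\overrightarrow{A_iA_{i+1}})=\pi_1(\overrightarrow{A_{i-1}A_i}),\qquad i=0,\ldots,n+1.$$ Moreover, if $\gamma(t)\in\Delta$ for all $t\in(0,1)$, then the points $A_i$ can be chosen to be distinct.
   Context: $\pi_1(a,b)=a$ and $\pi_2(a,b)=b$ are the coordinate projections; $\overrightarrow{AB}=B-A$. $\Delta=\{(a,b)\in(0,1)^2: a>b\}$. A function $f:[0,1]\to\mathbb{R}$ is called piecewise monotone if there is a partition of $[0,1]$ into finitely many subintervals on each of which $f$ is strictly increasing or strictly decreasing. $\mathcal U$ denotes the set of piecewise monotone continuous functions $f:[0,1]\to[0,1]$ with the property that, for every $c\in[0,1]$, the set $f^{-1}(c)$ does not contain both a local maximum point and a local minimum point of $f$. *)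

theory Defs
  imports "HOL-Analysis.Analysis"
begin

definition piecewise_monotone :: "(real \<Rightarrow> real) \<Rightarrow> bool" where
  "piecewise_monotone f \<longleftrightarrow>
     (\<exists>(k::nat) (x::nat \<Rightarrow> real). x 0 = 0 \<and> x k = 1 \<and> (\<forall>i<k. x i < x (Suc i)) \<and>
        (\<forall>i<k. monotone_on {x i..x (Suc i)} (<) (<) f \<or>
               monotone_on {x i..x (Suc i)} (<) (>) f))"

definition local_max_point :: "(real \<Rightarrow> real) \<Rightarrow> real \<Rightarrow> bool" where
  "local_max_point f x \<longleftrightarrow> x \<in> {0..1} \<and>
     (\<exists>e>0. \<forall>y\<in>{0..1}. \<bar>y - x\<bar> < e \<longrightarrow> f y \<le> f x)"

definition local_min_point :: "(real \<Rightarrow> real) \<Rightarrow> real \<Rightarrow> bool" where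
  "local_min_point f x \<longleftrightarrow> x \<in> {0..1} \<and>
     (\<exists>e>0. \<forall>y\<in>{0..1}. \<bar>y - x\<bar> < e \<longrightarrow> f x \<le> f y)"

definition classU :: "(real \<Rightarrow> real) set" where
  "classU = {f. piecewise_monotone f \<and> continuous_on {0..1} f \<and> f ` {0..1} \<subseteq> {0..1} \<and>
     (\<forall>c. \<not> ((\<exists>x. x \<in> {0..1} \<and> f x = c \<and> local_max_point f x) \<and>
             (\<exists>y. y \<in> {0..1} \<and> f y = c \<and> local_min_point f y)))}"

definition Delta :: "(real \<times> real) set" where
  "Delta = {(a, b). 0 < a \<and> a < 1 \<and> 0 < b \<and> b < 1 \<and> a > b}"

end

theory Submission
  imports Defs
begin

text \<open>Look for the points as \<open>A i = \<gamma> (t i)\<close> with \<open>t 0 = 0\<close> and \<open>t (n + 2) = 1\<close>. The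
  condition \<open>\<pi>\<^sub>2 (A (i + 1) - A i) = \<pi>\<^sub>1 (A i - A (i - 1))\<close> says that the gap
  \<open>\<pi>\<^sub>2 (A (i + 1)) - \<pi>\<^sub>1 (A i)\<close> does not depend on \<open>i\<close>, so we need \<open>n + 1\<close> parameters
  \<open>t 1, \<dots>, t (n + 1)\<close> in \<open>[0, 1]\<close> solving the \<open>n + 1\<close> equations "gap i = gap (i + 1)".
  Since \<open>\<gamma>\<close> runs from \<open>(0, 0)\<close> to \<open>(1, 1)\<close> inside the unit square, the difference
  gap i - gap (i + 1) is \<open>\<le> 0\<close> when \<open>t (i + 1) = 0\<close> and \<open>\<ge> 0\<close> when \<open>t (i + 1) = 1\<close>, so the
  Poincare-Miranda theorem, proved here from Kuhn's combinatorial lemma, gives a solution.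
  If \<open>\<gamma>\<close> runs below the diagonal, the common gap is positive and \<open>\<pi>\<^sub>1 (A i)\<close> increases
  strictly with \<open>i\<close>, so the points are distinct.\<close>

definition unit_cube :: "nat \<Rightarrow> (nat \<Rightarrow> real) set" where
  "unit_cube m = {x. \<forall>j<m. x j \<in> {0..1}}"

lemma unit_cube_seq_compact:
  fixes X :: "nat \<Rightarrow> nat \<Rightarrow> real"
  assumes "\<And>k. X k \<in> unit_cube m"
  obtains r l where "strict_mono r" "l \<in> unit_cube m" "\<And>i. i < m \<Longrightarrow> (\<lambda>k. X (r k) i) \<longlonglongrightarrow> l i"
proof -
  have "\<exists>r l. strict_mono r \<and> l \<in> unit_cube m \<and> (\<forall>i<m. (\<lambda>k. X (r k) i) \<longlonglongrightarrow> l i)"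
    using assms
  proof (induction m)
    case 0
    show ?case by (rule exI[of _ id]) (simp add: strict_mono_def unit_cube_def)
  next
    case (Suc m)
    then obtain r l where r: "strict_mono r" and l: "l \<in> unit_cube m"
      and lim: "\<forall>i<m. (\<lambda>k. X (r k) i) \<longlonglongrightarrow> l i"
      by (auto simp: unit_cube_def)
    have "\<forall>k. X (r k) m \<in> {0..1}" using Suc.prems by (auto simp: unit_cube_def)
    then obtain a r' where a: "a \<in> {0..1}" "strict_mono r'" "((\<lambda>k. X (r k) m) \<circ> r') \<longlonglongrightarrow> a"
      using compact_imp_seq_compact[OF compact_Icc[of 0 1]] unfolding seq_compact_def by metis
    have "(\<lambda>k. X ((r \<circ> r') k) i) \<longlonglongrightarrow> (l(m := a)) i" if "i < Suc m" for i
    proof (cases "i = m")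
      case True
      then show ?thesis using a(3) by (simp add: o_def)
    next
      case False
      then have "i < m" using that by simp
      then have "((\<lambda>k. X (r k) i) \<circ> r') \<longlonglongrightarrow> l i"
        using lim LIMSEQ_subseq_LIMSEQ a(2) by blast
      then show ?thesis using False by (simp add: o_def)
    qed
    moreover have "l(m := a) \<in> unit_cube (Suc m)"
      using l a(1) by (auto simp: unit_cube_def less_Suc_eq)
    ultimately show ?case using strict_mono_o[OF r a(2)] by blast
  qed
  then show ?thesis using that by blast
qed

lemma tendsto_of_uniform_modulus:
  fixes F :: "nat \<Rightarrow> (nat \<Rightarrow> real) \<Rightarrow> real"
  assumes modulus: "\<And>e. e > 0 \<Longrightarrow> \<exists>d>0. \<forall>x\<in>unit_cube m. \<forall>y\<in>unit_cube m.
      (\<forall>j<m. \<bar>x j - y j\<bar> < d) \<longrightarrow> (\<forall>i<m. \<bar>F i x - F i y\<bar> < e)"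
    and Y: "\<And>k. Y k \<in> unit_cube m" and l: "l \<in> unit_cube m"
    and lim: "\<And>j. j < m \<Longrightarrow> (\<lambda>k. Y k j) \<longlonglongrightarrow> l j"
    and i: "i < m"
  shows "(\<lambda>k. F i (Y k)) \<longlonglongrightarrow> F i l"
proof (rule tendstoI)
  fix e :: real assume "e > 0"
  then obtain d where "d > 0" and d: "\<forall>x\<in>unit_cube m. \<forall>y\<in>unit_cube m.
      (\<forall>j<m. \<bar>x j - y j\<bar> < d) \<longrightarrow> (\<forall>i<m. \<bar>F i x - F i y\<bar> < e)"
    using modulus by blast
  have "\<forall>j\<in>{..<m}. eventually (\<lambda>k. \<bar>Y k j - l j\<bar> < d) sequentially"
    using lim \<open>d > 0\<close> unfolding tendsto_iff dist_real_def by blast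
  then have "eventually (\<lambda>k. \<forall>j\<in>{..<m}. \<bar>Y k j - l j\<bar> < d) sequentially"
    by (rule eventually_ball_finite[rotated]) simp
  then show "eventually (\<lambda>k. dist (F i (Y k)) (F i l) < e) sequentially"
    by eventually_elim (use d Y l i in \<open>auto simp: dist_real_def\<close>)
qed

lemma poincare_miranda_approx:
  fixes F :: "nat \<Rightarrow> (nat \<Rightarrow> real) \<Rightarrow> real"
  assumes modulus: "\<And>e. e > 0 \<Longrightarrow> \<exists>d>0. \<forall>x\<in>unit_cube m. \<forall>y\<in>unit_cube m.
      (\<forall>j<m. \<bar>x j - y j\<bar> < d) \<longrightarrow> (\<forall>i<m. \<bar>F i x - F i y\<bar> < e)"
    and lower: "\<And>x i. x \<in> unit_cube m \<Longrightarrow> i < m \<Longrightarrow> x i = 0 \<Longrightarrow> F i x \<le> 0"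
    and upper: "\<And>x i. x \<in> unit_cube m \<Longrightarrow> i < m \<Longrightarrow> x i = 1 \<Longrightarrow> F i x \<ge> 0"
    and "e > 0"
  shows "\<exists>x\<in>unit_cube m. \<forall>i<m. \<bar>F i x\<bar> < e"
proof -
  obtain d where "d > 0" and d: "\<forall>x\<in>unit_cube m. \<forall>y\<in>unit_cube m.
      (\<forall>j<m. \<bar>x j - y j\<bar> < d) \<longrightarrow> (\<forall>i<m. \<bar>F i x - F i y\<bar> < e)"
    using modulus[OF \<open>e > 0\<close>] by blast
  obtain p :: nat where p: "p > 0" "1 / real p < d"
    using reals_Archimedean[OF \<open>d > 0\<close>] by (metis inverse_eq_divide of_nat_0_less_iff zero_less_Suc)
  define grid where "grid y = (\<lambda>j. real (y j) / real p)" for y :: "nat \<Rightarrow> nat"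
  have grid_cube: "grid y \<in> unit_cube m" if "\<forall>j<m. y j \<le> p" for y
    using that p(1) by (auto simp: unit_cube_def grid_def)
  \<comment> \<open>Label a grid vertex by the sign of \<open>F i\<close>, overridden on the faces so that Kuhn's lemma applies.\<close>
  define label where "label y i =
      (if y i = 0 then 0 else if y i = p then 1 else if F i (grid y) < 0 then 0 else (1::nat))" for y i
  have label_01: "label y i = 0 \<or> label y i = 1" for y i
    by (simp add: label_def)
  have label0: "F i (grid y) \<le> 0" if "\<forall>j<m. y j \<le> p" "i < m" "label y i = 0" for y i
    using that lower[OF grid_cube[OF that(1)] that(2)] p(1)
    by (auto simp: label_def grid_def split: if_splits)
  have label1: "F i (grid y) \<ge> 0" if "\<forall>j<m. y j \<le> p" "i < m" "label y i \<noteq> 0" for y i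
    using that upper[OF grid_cube[OF that(1)] that(2)] p(1)
    by (auto simp: label_def grid_def split: if_splits)
  obtain q where q: "\<forall>i<m. q i < p"
    and bichromatic: "\<forall>i<m. \<exists>r s. (\<forall>j<m. q j \<le> r j \<and> r j \<le> q j + 1) \<and>
        (\<forall>j<m. q j \<le> s j \<and> s j \<le> q j + 1) \<and> label r i \<noteq> label s i"
    by (rule kuhn_lemma[OF p(1), of m label]) (use label_01 p(1) in \<open>auto simp: label_def\<close>)
  have q_cube: "grid q \<in> unit_cube m" using q grid_cube by (simp add: less_imp_le)
  have near_q: "\<bar>F i (grid q) - F i (grid r)\<bar> < e"
    if r: "\<forall>j<m. q j \<le> r j \<and> r j \<le> q j + 1" and i: "i < m" for r i
  proof -
    have "\<bar>grid q j - grid r j\<bar> \<le> 1 / real p" if "j < m" for j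
    proof -
      have "grid r j - grid q j = (real (r j) - real (q j)) / real p"
        by (simp add: grid_def diff_divide_distrib)
      moreover have "0 \<le> real (r j) - real (q j)" "real (r j) - real (q j) \<le> 1"
        using r that by auto
      ultimately have "\<bar>grid r j - grid q j\<bar> \<le> 1 / real p"
        using p(1) by (simp add: divide_right_mono)
      then show ?thesis by (simp add: abs_minus_commute)
    qed
    then have "\<forall>j<m. \<bar>grid q j - grid r j\<bar> < d" using p(2) by fastforce
    moreover have "grid r \<in> unit_cube m"
      using r q by (intro grid_cube) (metis Suc_eq_plus1 Suc_leI order_trans)
    ultimately show ?thesis using d q_cube i by blast
  qed
  have "\<bar>F i (grid q)\<bar> < e" if i: "i < m" for i
  proof -
    obtain r s where r: "\<forall>j<m. q j \<le> r j \<and> r j \<le> q j + 1" and s: "\<forall>j<m. q j \<le> s j \<and> s j \<le> q j + 1"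
      and rs: "label r i \<noteq> label s i" using bichromatic i by blast
    have r_le: "\<forall>j<m. r j \<le> p" and s_le: "\<forall>j<m. s j \<le> p"
      using r s q by (metis Suc_eq_plus1 Suc_leI order_trans)+
    have "label r i = 0 \<and> label s i \<noteq> 0 \<or> label s i = 0 \<and> label r i \<noteq> 0"
      using rs label_01[of r i] label_01[of s i] by auto
    then have "F i (grid r) \<le> 0 \<and> F i (grid s) \<ge> 0 \<or> F i (grid s) \<le> 0 \<and> F i (grid r) \<ge> 0"
      using label0[OF r_le i] label1[OF r_le i] label0[OF s_le i] label1[OF s_le i] by blast
    then show ?thesis using near_q[OF r i] near_q[OF s i] by (auto simp: abs_less_iff)
  qed
  then show ?thesis using q_cube by blast
qed

theorem poincare_miranda:
  fixes F :: "nat \<Rightarrow> (nat \<Rightarrow> real) \<Rightarrow> real"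
  assumes modulus: "\<And>e. e > 0 \<Longrightarrow> \<exists>d>0. \<forall>x\<in>unit_cube m. \<forall>y\<in>unit_cube m.
      (\<forall>j<m. \<bar>x j - y j\<bar> < d) \<longrightarrow> (\<forall>i<m. \<bar>F i x - F i y\<bar> < e)"
    and lower: "\<And>x i. x \<in> unit_cube m \<Longrightarrow> i < m \<Longrightarrow> x i = 0 \<Longrightarrow> F i x \<le> 0"
    and upper: "\<And>x i. x \<in> unit_cube m \<Longrightarrow> i < m \<Longrightarrow> x i = 1 \<Longrightarrow> F i x \<ge> 0"
  shows "\<exists>x\<in>unit_cube m. \<forall>i<m. F i x = 0"
proof -
  have "\<exists>x\<in>unit_cube m. \<forall>i<m. \<bar>F i x\<bar> < inverse (real (Suc k))" for k
    by (rule poincare_miranda_approx[OF modulus lower upper]) auto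
  then obtain X where X: "\<And>k. X k \<in> unit_cube m"
    and small: "\<And>k i. i < m \<Longrightarrow> \<bar>F i (X k)\<bar> < inverse (real (Suc k))"
    by metis
  obtain r l where r: "strict_mono r" and l: "l \<in> unit_cube m"
    and lim: "\<And>i. i < m \<Longrightarrow> (\<lambda>k. X (r k) i) \<longlonglongrightarrow> l i"
    using unit_cube_seq_compact[of X m, OF X] by blast
  have "F i l = 0" if i: "i < m" for i
  proof (rule LIMSEQ_unique)
    show "(\<lambda>k. F i (X (r k))) \<longlonglongrightarrow> F i l"
      using tendsto_of_uniform_modulus[OF modulus X l lim i] .
    have "\<bar>F i (X (r k))\<bar> \<le> inverse (real (Suc k))" for k
    proof -
      have "inverse (real (Suc (r k))) \<le> inverse (real (Suc k))"
        using seq_suble[OF r, of k] by (simp add: le_imp_inverse_le)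
      then show ?thesis using small[OF i, of "r k"] by linarith
    qed
    then show "(\<lambda>k. F i (X (r k))) \<longlonglongrightarrow> 0"
      by (intro Lim_null_comparison[OF _ LIMSEQ_inverse_real_of_nat]) simp
  qed
  then show ?thesis using l by blast
qed

definition pad_params :: "nat \<Rightarrow> (nat \<Rightarrow> real) \<Rightarrow> nat \<Rightarrow> real" where
  "pad_params n x k = (if k = 0 then 0 else if k \<le> Suc n then x (k - 1) else 1)"

definition gap :: "(real \<Rightarrow> real) \<Rightarrow> (real \<Rightarrow> real) \<Rightarrow> (nat \<Rightarrow> real) \<Rightarrow> nat \<Rightarrow> real" where
  "gap f g t k = f (t (Suc k)) - g (t k)"

lemma pad_params_unit_interval: "x \<in> unit_cube (Suc n) \<Longrightarrow> pad_params n x k \<in> {0..1}"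
  by (auto simp: pad_params_def unit_cube_def)

lemma gap_pad_params_uniform_modulus:
  assumes f: "uniformly_continuous_on {0..1} f" and g: "uniformly_continuous_on {0..1} g"
    and "e > 0"
  shows "\<exists>d>0. \<forall>x\<in>unit_cube (Suc n). \<forall>y\<in>unit_cube (Suc n). (\<forall>j<Suc n. \<bar>x j - y j\<bar> < d) \<longrightarrow>
           (\<forall>k. \<bar>gap f g (pad_params n x) k - gap f g (pad_params n y) k\<bar> < e)"
proof -
  have "e/2 > 0" using \<open>e > 0\<close> by simp
  then obtain d1 d2 where "d1 > 0" "d2 > 0"
    and d1: "\<forall>s\<in>{0..1}. \<forall>s'\<in>{0..1}. dist s' s < d1 \<longrightarrow> dist (f s') (f s) < e/2"
    and d2: "\<forall>s\<in>{0..1}. \<forall>s'\<in>{0..1}. dist s' s < d2 \<longrightarrow> dist (g s') (g s) < e/2"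
    using f g unfolding uniformly_continuous_on_def by metis
  have "\<bar>gap f g (pad_params n x) k - gap f g (pad_params n y) k\<bar> < e"
    if x: "x \<in> unit_cube (Suc n)" and y: "y \<in> unit_cube (Suc n)"
      and near: "\<forall>j<Suc n. \<bar>x j - y j\<bar> < min d1 d2" for x y k
  proof -
    have "\<bar>pad_params n x l - pad_params n y l\<bar> < min d1 d2" for l
      using near \<open>d1 > 0\<close> \<open>d2 > 0\<close> by (auto simp: pad_params_def)
    then have "\<bar>f (pad_params n x (Suc k)) - f (pad_params n y (Suc k))\<bar> < e/2"
      and "\<bar>g (pad_params n x k) - g (pad_params n y k)\<bar> < e/2"
      using d1 d2 pad_params_unit_interval[OF x] pad_params_unit_interval[OF y]
      by (auto simp: dist_real_def)
    then show ?thesis unfolding gap_def by arith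
  qed
  then show ?thesis using \<open>d1 > 0\<close> \<open>d2 > 0\<close> by (metis min_less_iff_conj)
qed

lemma pad_params_equal_gaps:
  fixes f g :: "real \<Rightarrow> real" and n :: nat
  assumes "continuous_on {0..1} f" "continuous_on {0..1} g"
    and f01: "f ` {0..1} \<subseteq> {0..1}" and g01: "g ` {0..1} \<subseteq> {0..1}"
    and "f 0 = 0" "g 0 = 0" "f 1 = 1" "g 1 = 1"
  shows "\<exists>x\<in>unit_cube (Suc n). \<forall>i<Suc n.
           gap f g (pad_params n x) i = gap f g (pad_params n x) (Suc i)"
proof -
  have uc: "uniformly_continuous_on {0..1} f" "uniformly_continuous_on {0..1} g"
    using assms(1,2) by (simp_all add: compact_uniformly_continuous)
  define F where "F i x = gap f g (pad_params n x) i - gap f g (pad_params n x) (Suc i)" for i x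
  have "\<exists>x\<in>unit_cube (Suc n). \<forall>i<Suc n. F i x = 0"
  proof (rule poincare_miranda)
    fix e :: real assume "e > 0"
    then obtain d where "d > 0" and d: "\<forall>x\<in>unit_cube (Suc n). \<forall>y\<in>unit_cube (Suc n).
        (\<forall>j<Suc n. \<bar>x j - y j\<bar> < d) \<longrightarrow>
        (\<forall>k. \<bar>gap f g (pad_params n x) k - gap f g (pad_params n y) k\<bar> < e/2)"
      using gap_pad_params_uniform_modulus[OF uc half_gt_zero[OF \<open>e > 0\<close>], of n] by blast
    show "\<exists>d>0. \<forall>x\<in>unit_cube (Suc n). \<forall>y\<in>unit_cube (Suc n).
        (\<forall>j<Suc n. \<bar>x j - y j\<bar> < d) \<longrightarrow> (\<forall>i<Suc n. \<bar>F i x - F i y\<bar> < e)"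
    proof (intro exI[of _ d] conjI ballI impI allI)
      fix x y i assume "x \<in> unit_cube (Suc n)" "y \<in> unit_cube (Suc n)" "\<forall>j<Suc n. \<bar>x j - y j\<bar> < d"
      then have "\<bar>gap f g (pad_params n x) k - gap f g (pad_params n y) k\<bar> < e/2" for k
        using d by blast
      from this[of i] this[of "Suc i"] show "\<bar>F i x - F i y\<bar> < e"
        unfolding F_def by arith
    qed (rule \<open>d > 0\<close>)
  next
    fix x i assume x: "x \<in> unit_cube (Suc n)" and "i < Suc n" "x i = 0"
    then have "pad_params n x (Suc i) = 0" by (simp add: pad_params_def)
    moreover have "0 \<le> g (pad_params n x i)" "0 \<le> f (pad_params n x (Suc (Suc i)))"
      using f01 g01 pad_params_unit_interval[OF x] by (auto simp: image_subset_iff)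
    ultimately show "F i x \<le> 0"
      using \<open>f 0 = 0\<close> \<open>g 0 = 0\<close> by (simp add: F_def gap_def)
  next
    fix x i assume x: "x \<in> unit_cube (Suc n)" and "i < Suc n" "x i = 1"
    then have "pad_params n x (Suc i) = 1" by (simp add: pad_params_def)
    moreover have "g (pad_params n x i) \<le> 1" "f (pad_params n x (Suc (Suc i))) \<le> 1"
      using f01 g01 pad_params_unit_interval[OF x] by (auto simp: image_subset_iff)
    ultimately show "F i x \<ge> 0"
      using \<open>f 1 = 1\<close> \<open>g 1 = 1\<close> by (simp add: F_def gap_def)
  qed
  then show ?thesis by (simp add: F_def)
qed

lemma constant_gap_parameters:
  fixes f g :: "real \<Rightarrow> real" and n :: nat
  assumes "continuous_on {0..1} f" "continuous_on {0..1} g"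
    and "f ` {0..1} \<subseteq> {0..1}" "g ` {0..1} \<subseteq> {0..1}"
    and "f 0 = 0" "g 0 = 0" "f 1 = 1" "g 1 = 1"
  obtains t c where "t 0 = 0" "t (Suc (Suc n)) = 1" "\<And>k. t k \<in> {0..1}"
    "\<And>k. k \<le> Suc n \<Longrightarrow> f (t (Suc k)) = g (t k) + c"
proof -
  obtain x where x: "x \<in> unit_cube (Suc n)"
    and equal: "\<forall>i<Suc n. gap f g (pad_params n x) i = gap f g (pad_params n x) (Suc i)"
    using pad_params_equal_gaps[OF assms] by blast
  define t where "t = pad_params n x"
  have "gap f g t k = gap f g t 0" if "k \<le> Suc n" for k
    using that
  proof (induction k)
    case (Suc k)
    then show ?case using equal by (simp add: t_def)
  qed simp
  then have "f (t (Suc k)) = g (t k) + gap f g t 0" if "k \<le> Suc n" for k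
    using that unfolding gap_def by (metis add.commute diff_eq_eq)
  moreover have "t 0 = 0" "t (Suc (Suc n)) = 1" "\<And>k. t k \<in> {0..1}"
    using pad_params_unit_interval[OF x] by (simp_all add: t_def pad_params_def)
  ultimately show ?thesis using that by blast
qed

lemma constant_gap_parameters_strict_mono:
  fixes f g :: "real \<Rightarrow> real" and t :: "nat \<Rightarrow> real"
  assumes below: "\<And>s. s \<in> {0..1} \<Longrightarrow> f s \<le> g s"
    and nonpos: "\<And>s. s \<in> {0..1} \<Longrightarrow> f s \<le> 0 \<Longrightarrow> g s \<le> 0"
    and "g 0 = 0" "f 1 = 1" "t 0 = 0" "t (Suc (Suc n)) = 1" and t01: "\<And>k. t k \<in> {0..1}"
    and chain: "\<And>k. k \<le> Suc n \<Longrightarrow> f (t (Suc k)) = g (t k) + c"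
  shows "strict_mono_on {..Suc (Suc n)} (g \<circ> t)"
proof -
  have "c > 0"
  proof (rule ccontr)
    assume "\<not> c > 0"
    have "g (t k) \<le> 0" if "k \<le> Suc n" for k
      using that
    proof (induction k)
      case (Suc k)
      then show ?case using chain[of k] nonpos[OF t01] \<open>\<not> c > 0\<close> by force
    qed (simp add: \<open>t 0 = 0\<close> \<open>g 0 = 0\<close>)
    then have "g (t (Suc n)) \<le> 0" by simp
    then show False
      using chain[of "Suc n"] \<open>\<not> c > 0\<close> \<open>t (Suc (Suc n)) = 1\<close> \<open>f 1 = 1\<close> by simp
  qed
  then have step: "g (t k) < g (t (Suc k))" if "k \<le> Suc n" for k
    using chain[OF that] below[OF t01, of "Suc k"] by linarith
  show ?thesis
  proof (rule strict_mono_onI)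
    fix j k :: nat assume "k \<in> {..Suc (Suc n)}" "j < k"
    then show "(g \<circ> t) j < (g \<circ> t) k"
    proof (induction k)
      case (Suc k)
      then show ?case using step[of k] by (cases "j = k") auto
    qed simp
  qed
qed

lemma Delta_curve_below_diagonal:
  fixes \<gamma> :: "real \<Rightarrow> real \<times> real"
  assumes "\<forall>s\<in>{0<..<1}. \<gamma> s \<in> Delta" "\<gamma> 0 = (0, 0)" "\<gamma> 1 = (1, 1)" "s \<in> {0..1}"
  shows "snd (\<gamma> s) \<le> fst (\<gamma> s)" and "snd (\<gamma> s) \<le> 0 \<Longrightarrow> fst (\<gamma> s) \<le> 0"
proof -
  obtain a b where ab: "\<gamma> s = (a, b)" by (cases "\<gamma> s")
  have "(a, b) \<in> Delta" if "s \<in> {0<..<1}" using assms(1) that ab by metis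
  moreover have "s = 0 \<or> s = 1 \<or> s \<in> {0<..<1}" using assms(4) by auto
  ultimately have "b \<le> a \<and> (b \<le> 0 \<longrightarrow> a \<le> 0)"
    using assms(2,3) ab by (auto simp: Delta_def)
  then show "snd (\<gamma> s) \<le> fst (\<gamma> s)" and "snd (\<gamma> s) \<le> 0 \<Longrightarrow> fst (\<gamma> s) \<le> 0"
    using ab by auto
qed

definition chain_points :: "(real \<Rightarrow> real \<times> real) \<Rightarrow> nat \<Rightarrow> (nat \<Rightarrow> real) \<Rightarrow> int \<Rightarrow> real \<times> real" where
  "chain_points \<gamma> n t i = (if i < 0 then \<gamma> (t (Suc n)) - (1, 1) else \<gamma> (t (nat i)))"

lemma chain_points_conditions:
  fixes \<gamma> :: "real \<Rightarrow> real \<times> real"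
  assumes "\<gamma> 0 = (0, 0)" "\<gamma> 1 = (1, 1)"
    and "t 0 = 0" "t (Suc (Suc n)) = 1" "\<And>k. t k \<in> {0..1}"
    and chain: "\<And>k. k \<le> Suc n \<Longrightarrow> snd (\<gamma> (t (Suc k))) = fst (\<gamma> (t k)) + c"
  defines "A \<equiv> chain_points \<gamma> n t"
  shows "A 0 = (0, 0)" "A (int n + 2) = (1, 1)" "A (-1) = A (int n + 1) - (1, 1)"
    and "\<forall>i\<in>{1..int n + 1}. A i \<in> \<gamma> ` {0..1}"
    and "\<forall>i\<in>{0..int n + 1}. snd (A (i + 1) - A i) = fst (A i - A (i - 1))"
proof -
  have A_nat: "A (int k) = \<gamma> (t k)" for k by (simp add: A_def chain_points_def)
  have "nat (int n + 2) = Suc (Suc n)" "nat (int n + 1) = Suc n" by simp_all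
  then show "A 0 = (0, 0)" "A (int n + 2) = (1, 1)" "A (-1) = A (int n + 1) - (1, 1)"
    using assms(1-4) by (simp_all add: A_def chain_points_def)
  show "\<forall>i\<in>{1..int n + 1}. A i \<in> \<gamma> ` {0..1}"
    using assms(5) by (auto simp: A_def chain_points_def)
  show "\<forall>i\<in>{0..int n + 1}. snd (A (i + 1) - A i) = fst (A i - A (i - 1))"
  proof
    fix i assume "i \<in> {0..int n + 1}"
    then obtain k where k: "i = int k" "k \<le> Suc n"
      by (metis atLeastAtMost_iff nonneg_int_cases of_nat_Suc of_nat_le_iff add.commute)
    have "A (i + 1) = \<gamma> (t (Suc k))" using A_nat[of "Suc k"] k by (simp add: add.commute)
    moreover have "A i = \<gamma> (t k)" using A_nat k by simp
    moreover consider "k = 0" | k' where "k = Suc k'" by (cases k)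
    then have "snd (\<gamma> (t (Suc k)) - \<gamma> (t k)) = fst (\<gamma> (t k) - A (i - 1))"
    proof cases
      case 1
      then have "A (i - 1) = \<gamma> (t (Suc n)) - (1, 1)" using k by (simp add: A_def chain_points_def)
      then show ?thesis using 1 chain[of 0] chain[of "Suc n"] assms(1-4) by simp
    next
      case (2 k')
      then have "A (i - 1) = \<gamma> (t k')" using k A_nat[of k'] by simp
      then show ?thesis using 2 chain[of k] chain[of k'] k by simp
    qed
    ultimately show "snd (A (i + 1) - A i) = fst (A i - A (i - 1))" by simp
  qed
qed

lemma chain_points_inj_on:
  assumes "inj_on (fst \<circ> \<gamma> \<circ> t) {..Suc (Suc n)}"
  shows "inj_on (chain_points \<gamma> n t) {0..int n + 2}"
proof (rule inj_onI)
  fix i j assume i: "i \<in> {0..int n + 2}" and j: "j \<in> {0..int n + 2}"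
    and eq: "chain_points \<gamma> n t i = chain_points \<gamma> n t j"
  have "(fst \<circ> \<gamma> \<circ> t) (nat i) = (fst \<circ> \<gamma> \<circ> t) (nat j)"
    using i j eq by (simp add: chain_points_def)
  moreover have "nat i \<in> {..Suc (Suc n)}" "nat j \<in> {..Suc (Suc n)}" using i j by auto
  ultimately have "nat i = nat j" by (rule inj_onD[OF assms])
  then show "i = j" using i j by (simp add: nat_eq_iff2)
qed

theorem proposition2:
  fixes \<gamma> :: "real \<Rightarrow> real \<times> real" and n :: nat
  assumes "continuous_on {0..1} \<gamma>"
    and "\<gamma> ` {0..1} \<subseteq> {0..1} \<times> {0..1}"
    and "\<gamma> 0 = (0, 0)" and "\<gamma> 1 = (1, 1)"
    and "snd \<circ> \<gamma> \<in> classU"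
  shows "(\<exists>A :: int \<Rightarrow> real \<times> real.
            A 0 = (0, 0) \<and> A (int n + 2) = (1, 1) \<and> A (-1) = A (int n + 1) - (1, 1) \<and>
            (\<forall>i\<in>{1..int n + 1}. A i \<in> \<gamma> ` {0..1}) \<and>
            (\<forall>i\<in>{0..int n + 1}. snd (A (i + 1) - A i) = fst (A i - A (i - 1))))
       \<and> ((\<forall>t\<in>{0<..<1}. \<gamma> t \<in> Delta) \<longrightarrow>
          (\<exists>A :: int \<Rightarrow> real \<times> real.
            A 0 = (0, 0) \<and> A (int n + 2) = (1, 1) \<and> A (-1) = A (int n + 1) - (1, 1) \<and>
            (\<forall>i\<in>{1..int n + 1}. A i \<in> \<gamma> ` {0..1}) \<and>
            (\<forall>i\<in>{0..int n + 1}. snd (A (i + 1) - A i) = fst (A i - A (i - 1))) \<and>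
            inj_on A {0..int n + 2}))"
proof -
  have "continuous_on {0..1} (snd \<circ> \<gamma>)" "continuous_on {0..1} (fst \<circ> \<gamma>)"
    using assms(1) by (auto intro: continuous_intros simp: o_def)
  moreover have "(snd \<circ> \<gamma>) ` {0..1} \<subseteq> {0..1}" "(fst \<circ> \<gamma>) ` {0..1} \<subseteq> {0..1}"
    using assms(2) by (auto simp: image_subset_iff mem_Times_iff)
  ultimately obtain t c where t: "t 0 = 0" "t (Suc (Suc n)) = 1" "\<And>k. t k \<in> {0..1}"
    and chain: "\<And>k. k \<le> Suc n \<Longrightarrow> snd (\<gamma> (t (Suc k))) = fst (\<gamma> (t k)) + c"
    by (rule constant_gap_parameters[where n = n]) (auto simp: assms(3,4))
  note conditions = chain_points_conditions[OF assms(3,4) t chain]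
  have "inj_on (chain_points \<gamma> n t) {0..int n + 2}" if Delta: "\<forall>s\<in>{0<..<1}. \<gamma> s \<in> Delta"
  proof (rule chain_points_inj_on, rule strict_mono_on_imp_inj_on)
    show "strict_mono_on {..Suc (Suc n)} (fst \<circ> \<gamma> \<circ> t)"
      using constant_gap_parameters_strict_mono[of "snd \<circ> \<gamma>" "fst \<circ> \<gamma>" t n c]
        Delta_curve_below_diagonal[OF Delta assms(3,4)] t chain assms(3,4)
      by (simp add: o_def)
  qed
  then show ?thesis using conditions by blast
qed

end
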